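(* Let $b\in C^1([0,\infty))$ satisfy $b(t)>0$ for all $t\ge0$ and $b_0:=\limsup_{t\to\infty}\frac{|b'(t)|}{b(t)^2}<1$. Define for $t\ge0$ $$\Phi(t)=\int_t^\infty\exp\Big(-\int_t^sb(\sigma)\,d\sigma\Big)\,ds.$$ Then $\Phi$ is well defined (finite) and: (i) $\Phi(0)=B_0:=\int_0^\infty\exp(-\int_0^sb(\sigma)d\sigma)\,ds$, and $\Phi'(t)-b(t)\Phi(t)=-1$ for every $t\ge0$; (ii) there exist constants $t_0>0$, $B_1>0$, $B_2>0$ such that $\frac{B_1}{b(t)}\le\Phi(t)\le\frac{B_2}{b(t)}$ for every $t\ge t_0$; (iii) for every $t\ge t_0$, $|\Phi'(t)|\le\frac{1+b_0}{1-b_0}$; in particular $\Phi'$ is bounded on $[0,\infty)$. *)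

theory Defs
  imports "HOL-Analysis.Analysis"
begin

definition Phi :: "(real \<Rightarrow> real) \<Rightarrow> real \<Rightarrow> real" where
  "Phi b t = integral {t..} (\<lambda>s. exp (- integral {t..s} b))"

definition b0_ereal :: "(real \<Rightarrow> real) \<Rightarrow> (real \<Rightarrow> real) \<Rightarrow> ereal" where
  "b0_ereal b b' = Limsup at_top (\<lambda>t. ereal (\<bar>b' t\<bar> / (b t)\<^sup>2))"

end

theory Submission
  imports Defs
begin

text \<open>
  With E(s) = decay s = exp (- integral {0..s} b), Phi(t) is the tail integral of E divided
  by E(t), so Phi' = b Phi - 1 as soon as E is integrable. Once |b'| <= c b^2 with c < 1, the
  function (1 - c) * integral {t..x} E + E(x) / b(x) is nonincreasing in x; this gives
  integrability and Phi(t) <= 1 / ((1 - c) b(t)). There also (1/b)' >= -1, so b stays below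
  2 b(t) on [t, t + 1 / (2 b(t))], whence Phi(t) >= exp(-1) / (2 b(t)). Thus
  0 <= b Phi <= 1 / (1 - c), which bounds Phi' = b Phi - 1 for large t; on the remaining
  compact interval Phi' is bounded by continuity.
\<close>

lemma at_within_Ici_nontrivial:
  fixes a t :: real
  assumes "a \<le> t"
  shows "at t within {a..} \<noteq> bot"
proof -
  have "t islimpt {t..t+1}" by simp
  then have "t islimpt {a..}" by (rule islimpt_subset) (use assms in auto)
  then show ?thesis by (simp add: trivial_limit_within)
qed

lemma at_within_Ici_interior:
  fixes a x :: real
  assumes "a < x"
  shows "at x within {a..} = at x"
  by (rule at_within_interior) (use assms in simp)

lemma integral_has_real_derivative_Ici:
  fixes g :: "real \<Rightarrow> real"
  assumes "continuous_on {a..} g" "a \<le> t"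
  shows "((\<lambda>x. integral {a..x} g) has_real_derivative g t) (at t within {a..})"
proof -
  have "continuous_on {a..t+1} g" using assms(1) by (rule continuous_on_subset) auto
  then have "((\<lambda>x. integral {a..x} g) has_real_derivative g t) (at t within {a..t+1})"
    by (rule integral_has_real_derivative) (use assms in auto)
  moreover have "at t within {a..t+1} = at t within {a..}"
    by (rule at_within_nhd[of _ "{t-1<..<t+1}"]) (use assms in auto)
  ultimately show ?thesis by simp
qed

lemma has_integral_Icc_Ici_combine:
  fixes f :: "real \<Rightarrow> real"
  assumes "(f has_integral I) {a..t}" "(f has_integral J) {t..}" "a \<le> t"
  shows "(f has_integral I + J) {a..}"
proof -
  have "negligible ({a..t} \<inter> {t..})" by (rule negligible_subset[of "{t}"]) auto
  moreover have "{a..t} \<union> {t..} = {a..}" using assms(3) by auto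
  ultimately show ?thesis using has_integral_Un[OF assms(1,2)] by simp
qed

lemma nonneg_integrable_on_Ici_bounded:
  fixes f :: "real \<Rightarrow> real"
  assumes nonneg: "\<And>x. a \<le> x \<Longrightarrow> 0 \<le> f x"
    and int: "\<And>x. f integrable_on {a..x}"
    and bound: "\<And>x. a \<le> x \<Longrightarrow> integral {a..x} f \<le> K"
  shows "f integrable_on {a..} \<and> integral {a..} f \<le> K"
proof -
  define g where "g k x = (if x \<in> {a..a + real k} then f x else 0)" for k :: nat and x
  have integral_g: "integral {a..} (g k) = integral {a..a + real k} f" for k
  proof -
    have "integral {a..} (g k) = integral ({a..a + real k} \<inter> {a..}) f"
      unfolding g_def by (rule integral_restrict_Int)
    also have "{a..a + real k} \<inter> {a..} = {a..a + real k}" by auto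
    finally show ?thesis .
  qed
  have conv: "f integrable_on {a..} \<and> (\<lambda>k. integral {a..} (g k)) \<longlonglongrightarrow> integral {a..} f"
  proof (rule monotone_convergence_increasing)
    show "g k integrable_on {a..}" for k
      unfolding g_def by (subst integrable_restrict_Int) (simp add: Int_absorb2 int)
    show "g k x \<le> g (Suc k) x" if "x \<in> {a..}" for k x
      using that nonneg[of x] unfolding g_def by simp
    show "(\<lambda>k. g k x) \<longlonglongrightarrow> f x" if "x \<in> {a..}" for x
    proof (rule tendsto_eventually)
      have "eventually (\<lambda>k. x - a \<le> real k) sequentially"
        by (rule eventually_sequentiallyI[of "nat \<lceil>x - a\<rceil>"]) linarith
      then show "eventually (\<lambda>k. g k x = f x) sequentially"
        by eventually_elim (use that in \<open>simp add: g_def\<close>)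
    qed
    have "\<bar>integral {a..} (g k)\<bar> \<le> K" for k
      unfolding integral_g using bound[of "a + real k"] integral_nonneg[OF int, of "a + real k"] nonneg
      by simp
    then show "bounded (range (\<lambda>k. integral {a..} (g k)))"
      unfolding bounded_real by blast
  qed
  have "integral {a..} f \<le> K"
  proof (rule LIMSEQ_le_const2)
    show "(\<lambda>k. integral {a..} (g k)) \<longlonglongrightarrow> integral {a..} f" using conv ..
    show "\<exists>N. \<forall>k\<ge>N. integral {a..} (g k) \<le> K" unfolding integral_g using bound by simp
  qed
  with conv show ?thesis by simp
qed

locale positive_rate =
  fixes b b' :: "real \<Rightarrow> real"
  assumes b_has_derivative: "\<And>t. 0 \<le> t \<Longrightarrow> (b has_real_derivative b' t) (at t within {0..})"
    and b_pos: "\<And>t. 0 \<le> t \<Longrightarrow> 0 < b t"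
begin

definition primitive :: "real \<Rightarrow> real" where
  "primitive x = integral {0..x} b"

definition decay :: "real \<Rightarrow> real" where
  "decay x = exp (- primitive x)"

lemma continuous_on_b: "continuous_on {0..} b"
  using b_has_derivative by (rule DERIV_continuous_on) simp

lemma b_integrable: "0 \<le> t \<Longrightarrow> b integrable_on {t..s}"
  by (rule integrable_continuous_real, rule continuous_on_subset[OF continuous_on_b]) auto

lemma primitive_has_derivative:
  "0 \<le> t \<Longrightarrow> (primitive has_real_derivative b t) (at t within {0..})"
  unfolding primitive_def[abs_def] by (rule integral_has_real_derivative_Ici[OF continuous_on_b])

lemma integral_b_eq_primitive_diff:
  assumes "0 \<le> t" "t \<le> s"
  shows "integral {t..s} b = primitive s - primitive t"
  using Henstock_Kurzweil_Integration.integral_combine[OF assms b_integrable[OF order_refl]]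
  unfolding primitive_def by simp

lemma decay_pos: "0 < decay x"
  by (simp add: decay_def)

lemma decay_has_derivative:
  "0 \<le> t \<Longrightarrow> (decay has_real_derivative - b t * decay t) (at t within {0..})"
  unfolding decay_def[abs_def]
  by (auto intro!: derivative_eq_intros primitive_has_derivative)

lemma continuous_on_decay: "continuous_on {0..} decay"
  using decay_has_derivative by (rule DERIV_continuous_on) simp

lemma decay_integrable: "0 \<le> t \<Longrightarrow> decay integrable_on {t..s}"
  by (rule integrable_continuous_real, rule continuous_on_subset[OF continuous_on_decay]) auto

lemma exp_integral_b_eq:
  assumes "0 \<le> t" "t \<le> s"
  shows "exp (- integral {t..s} b) = decay s / decay t"
  using assms by (simp add: integral_b_eq_primitive_diff decay_def exp_diff[symmetric])

lemma Phi_eq: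
  assumes "0 \<le> t"
  shows "Phi b t = integral {t..} decay / decay t"
proof -
  have "Phi b t = integral {t..} (\<lambda>s. decay s / decay t)"
    unfolding Phi_def by (rule integral_cong) (use assms exp_integral_b_eq in simp)
  then show ?thesis by simp
qed

end

locale slowly_varying_rate = positive_rate +
  fixes c T :: real
  assumes c_less_1: "c < 1"
    and T_pos: "0 < T"
    and slowly_varying: "\<And>t. T \<le> t \<Longrightarrow> \<bar>b' t\<bar> \<le> c * (b t)\<^sup>2"
begin

lemma integral_decay_Icc_le:
  assumes "T \<le> t" "t \<le> X"
  shows "(1 - c) * integral {t..X} decay \<le> decay t / b t - decay X / b X"
proof -
  define H where "H x = (1 - c) * integral {t..x} decay + decay x / b x" for x
  have sub: "{t..} \<subseteq> {0..}" using assms T_pos by auto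
  have H_deriv: "(H has_real_derivative - decay x * (c + b' x / (b x)\<^sup>2)) (at x within {t..})"
    if "t \<le> x" for x
  proof -
    have x: "0 \<le> x" "0 < b x" using that sub b_pos by auto
    have "((\<lambda>x. integral {t..x} decay) has_real_derivative decay x) (at x within {t..})"
      using continuous_on_subset[OF continuous_on_decay sub] that
      by (rule integral_has_real_derivative_Ici)
    then show ?thesis
      unfolding H_def[abs_def] using x
      by (auto intro!: derivative_eq_intros
            has_field_derivative_subset[OF decay_has_derivative sub]
            has_field_derivative_subset[OF b_has_derivative sub]
          simp: field_simps power2_eq_square)
  qed
  have "H X \<le> H t"
  proof (rule DERIV_nonpos_imp_decreasing_open[OF assms(2)])
    fix x assume x: "t < x" "x < X"
    have "- c * (b x)\<^sup>2 \<le> b' x" using slowly_varying[of x] assms x by linarith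
    then have "- c \<le> b' x / (b x)\<^sup>2" using b_pos[of x] sub x by (simp add: field_simps)
    then have "- decay x * (c + b' x / (b x)\<^sup>2) \<le> 0"
      using decay_pos[of x] by (simp add: mult_nonneg_nonneg)
    moreover have "at x within {t..} = at x" using x(1) by (rule at_within_Ici_interior)
    ultimately show "\<exists>y. (H has_real_derivative y) (at x) \<and> y \<le> 0"
      using H_deriv[of x] x by auto
  next
    show "continuous_on {t..X} H"
      by (rule DERIV_continuous_on, rule has_field_derivative_subset[OF H_deriv]) auto
  qed
  then show ?thesis by (simp add: H_def algebra_simps)
qed

lemma decay_integrable_Ici_le:
  assumes "T \<le> t"
  shows "decay integrable_on {t..} \<and> integral {t..} decay \<le> decay t / ((1 - c) * b t)"
proof (rule nonneg_integrable_on_Ici_bounded)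
  show "decay integrable_on {t..x}" for x using decay_integrable assms T_pos by simp
  show "0 \<le> decay x" for x using decay_pos less_imp_le by blast
  fix x assume "t \<le> x"
  have bt: "0 < b t" using b_pos assms T_pos by simp
  have "0 < decay x / b x" using decay_pos[of x] b_pos[of x] assms T_pos \<open>t \<le> x\<close> by simp
  then have "(1 - c) * integral {t..x} decay \<le> decay t / b t"
    using integral_decay_Icc_le[OF assms \<open>t \<le> x\<close>] by linarith
  then have "(1 - c) * b t * integral {t..x} decay \<le> decay t"
    using bt by (simp add: pos_le_divide_eq mult_ac)
  then show "integral {t..x} decay \<le> decay t / ((1 - c) * b t)"
    using bt c_less_1 by (simp add: pos_le_divide_eq mult_ac)
qed

lemma decay_integrable_Ici:
  assumes "0 \<le> t"
  shows "decay integrable_on {t..}"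
proof (cases "t \<le> T")
  case True
  show ?thesis
  proof (rule integrable_Un')
    show "decay integrable_on {t..T}" using decay_integrable assms by simp
    show "decay integrable_on {T..}" using decay_integrable_Ici_le by simp
    show "negligible ({t..T} \<inter> {T..})" by (rule negligible_subset[of "{T}"]) auto
    show "{t..} = {t..T} \<union> {T..}" using True by auto
  qed
next
  case False
  then show ?thesis using decay_integrable_Ici_le by simp
qed

lemma exp_integral_b_integrable:
  assumes "0 \<le> t"
  shows "(\<lambda>s. exp (- integral {t..s} b)) integrable_on {t..}"
proof -
  have "(\<lambda>s. decay s / decay t) integrable_on {t..}"
    using integrable_on_cmult_right[OF decay_integrable_Ici[OF assms], of "inverse (decay t)"]
    by (simp add: divide_inverse)
  then show ?thesis
    using integrable_cong[of "{t..}" "\<lambda>s. exp (- integral {t..s} b)"] assms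
    by (simp add: exp_integral_b_eq)
qed

lemma integral_decay_Ici_eq:
  assumes "0 \<le> t"
  shows "integral {t..} decay = integral {0..} decay - integral {0..t} decay"
proof -
  have "(decay has_integral integral {0..t} decay + integral {t..} decay) {0..}"
    using integrable_integral[OF decay_integrable[OF order_refl]]
      integrable_integral[OF decay_integrable_Ici[OF assms]] assms
    by (rule has_integral_Icc_Ici_combine)
  then show ?thesis by (simp add: integral_unique)
qed

lemma Phi_has_derivative:
  assumes "0 \<le> t"
  shows "(Phi b has_real_derivative b t * Phi b t - 1) (at t within {0..})"
proof -
  define I where "I = integral {0..} decay"
  have Phi_eq_quotient: "Phi b x = (I - integral {0..x} decay) / decay x" if "0 \<le> x" for x
    unfolding Phi_eq[OF that] integral_decay_Ici_eq[OF that] I_def ..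
  have "((\<lambda>x. (I - integral {0..x} decay) / decay x) has_real_derivative b t * Phi b t - 1)
      (at t within {0..})"
    using decay_pos[of t] assms
    by (auto intro!: derivative_eq_intros decay_has_derivative
          integral_has_real_derivative_Ici[OF continuous_on_decay]
        simp: Phi_eq_quotient field_simps power2_eq_square)
  then show ?thesis
    by (rule has_field_derivative_transform_within[OF _ zero_less_one]) (use assms Phi_eq_quotient in auto)
qed

lemma deriv_Phi: "0 < t \<Longrightarrow> deriv (Phi b) t = b t * Phi b t - 1"
  using Phi_has_derivative[of t] at_within_Ici_interior[of 0 t] by (simp add: DERIV_imp_deriv)

lemma Phi_upper:
  assumes "T \<le> t"
  shows "Phi b t \<le> 1 / (1 - c) / b t"
proof -
  have "Phi b t = integral {t..} decay / decay t" using assms T_pos by (simp add: Phi_eq)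
  also have "\<dots> \<le> decay t / ((1 - c) * b t) / decay t"
    using decay_integrable_Ici_le[OF assms] decay_pos[of t] by (intro divide_right_mono) auto
  also have "\<dots> = 1 / (1 - c) / b t" using decay_pos[of t] by simp
  finally show ?thesis .
qed

lemma inverse_b_lower:
  assumes "T \<le> t" "t \<le> s"
  shows "1 / b t - (s - t) \<le> 1 / b s"
proof -
  have "1 / b t + t \<le> 1 / b s + s"
  proof (rule DERIV_nonneg_imp_increasing_open[OF assms(2)])
    fix x assume x: "t < x" "x < s"
    have "0 < x" "0 < b x" using x assms T_pos b_pos by auto
    then have "((\<lambda>x. 1 / b x + x) has_real_derivative 1 - b' x / (b x)\<^sup>2) (at x)"
      using b_has_derivative[of x] at_within_Ici_interior[of 0 x]
      by (auto intro!: derivative_eq_intros simp: field_simps power2_eq_square)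
    moreover have "b' x \<le> c * (b x)\<^sup>2" using slowly_varying[of x] assms x by simp
    then have "b' x / (b x)\<^sup>2 \<le> c" using \<open>0 < b x\<close> by (simp add: pos_divide_le_eq)
    then have "0 \<le> 1 - b' x / (b x)\<^sup>2" using c_less_1 by simp
    ultimately show "\<exists>y. ((\<lambda>x. 1 / b x + x) has_real_derivative y) (at x) \<and> 0 \<le> y" by blast
  next
    have "continuous_on {t..s} b" using assms T_pos by (auto intro: continuous_on_subset[OF continuous_on_b])
    moreover have "b x \<noteq> 0" if "x \<in> {t..s}" for x using that assms T_pos b_pos[of x] by auto
    ultimately show "continuous_on {t..s} (\<lambda>x. 1 / b x + x)" by (auto intro!: continuous_intros)
  qed
  then show ?thesis by simp
qed

lemma b_le_twice:
  assumes "T \<le> t" "t \<le> s" "s \<le> t + 1 / (2 * b t)"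
  shows "b s \<le> 2 * b t"
proof -
  have bt: "0 < b t" "0 < b s" using assms T_pos b_pos by auto
  have "1 / b t - 1 / (2 * b t) = 1 / (2 * b t)" using bt by (simp add: field_simps)
  then have "1 / (2 * b t) \<le> 1 / b s" using inverse_b_lower[OF assms(1,2)] assms(3) by linarith
  then show ?thesis using bt by (simp add: field_simps)
qed

lemma decay_lower:
  assumes "T \<le> t" "t \<le> s" "s \<le> t + 1 / (2 * b t)"
  shows "exp (- 1) * decay t \<le> decay s"
proof -
  have t0: "0 \<le> t" and bt: "0 < b t" using assms T_pos b_pos by auto
  have "integral {t..s} b \<le> integral {t..s} (\<lambda>_. 2 * b t)"
    by (rule integral_le) (use b_integrable[OF t0] b_le_twice assms in auto)
  also have "\<dots> = 2 * b t * (s - t)" using assms(2) by simp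
  also have "\<dots> \<le> 2 * b t * (1 / (2 * b t))" using assms(3) bt by (intro mult_left_mono) auto
  also have "\<dots> = 1" using bt by simp
  finally have "exp (- 1) \<le> exp (- integral {t..s} b)" by simp
  then show ?thesis
    using exp_integral_b_eq[OF t0 assms(2)] decay_pos[of t] by (simp add: le_divide_eq)
qed

lemma Phi_lower:
  assumes "T \<le> t"
  shows "exp (- 1) / 2 / b t \<le> Phi b t"
proof -
  define h where "h = 1 / (2 * b t)"
  have t0: "0 \<le> t" and bt: "0 < b t" using assms T_pos b_pos by auto
  have "h * (exp (- 1) * decay t) = integral {t..t + h} (\<lambda>_. exp (- 1) * decay t)"
    using bt by (simp add: h_def)
  also have "\<dots> \<le> integral {t..t + h} decay"
    by (rule integral_le) (use decay_integrable[OF t0] decay_lower[OF assms] in \<open>auto simp: h_def\<close>)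
  also have "\<dots> \<le> integral {t..} decay"
    by (rule integral_subset_le)
      (use decay_integrable[OF t0] decay_integrable_Ici[OF t0] decay_pos in \<open>auto intro: less_imp_le\<close>)
  finally have "h * exp (- 1) \<le> Phi b t"
    using Phi_eq[OF t0] decay_pos[of t] by (simp add: le_divide_eq)
  then show ?thesis using bt by (simp add: h_def)
qed

lemma b_Phi_bound:
  assumes "T \<le> t"
  shows "\<bar>b t * Phi b t - 1\<bar> \<le> max 1 (c / (1 - c))"
proof -
  have bt: "0 < b t" using b_pos assms T_pos by simp
  have "0 < exp (- 1) / 2 / b t" using bt by simp
  then have "0 \<le> Phi b t" using Phi_lower[OF assms] by linarith
  then have "0 \<le> b t * Phi b t" using bt by simp
  moreover have "b t * Phi b t \<le> 1 / (1 - c)"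
    using mult_left_mono[OF Phi_upper[OF assms], of "b t"] bt by simp
  moreover have "1 / (1 - c) - 1 = c / (1 - c)" using c_less_1 by (simp add: field_simps)
  ultimately show ?thesis by (auto simp: abs_le_iff le_max_iff_disj)
qed

lemma Phi_derivative_bounded:
  "\<exists>M. \<forall>t\<ge>0. \<forall>D. (Phi b has_real_derivative D) (at t within {0..}) \<longrightarrow> \<bar>D\<bar> \<le> M"
proof -
  have "continuous_on {0..} (Phi b)"
    using Phi_has_derivative by (rule DERIV_continuous_on) simp
  then have "continuous_on {0..T} (Phi b)" by (rule continuous_on_subset) auto
  moreover have "continuous_on {0..T} b" by (rule continuous_on_subset[OF continuous_on_b]) auto
  ultimately have "continuous_on {0..T} (\<lambda>t. b t * Phi b t - 1)"
    by (intro continuous_intros)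
  then have "bounded ((\<lambda>t. b t * Phi b t - 1) ` {0..T})"
    by (intro compact_imp_bounded compact_continuous_image) (simp_all add: compact_Icc)
  then obtain a where a: "\<And>t. t \<in> {0..T} \<Longrightarrow> \<bar>b t * Phi b t - 1\<bar> \<le> a"
    unfolding bounded_real by blast
  have bound: "\<bar>b t * Phi b t - 1\<bar> \<le> max a (max 1 (c / (1 - c)))" if "0 \<le> t" for t
    using a[of t] b_Phi_bound[of t] that by (cases "t \<le> T") auto
  show ?thesis
  proof (intro exI allI impI)
    fix t D assume t: "0 \<le> t" and D: "(Phi b has_real_derivative D) (at t within {0..})"
    have "D = b t * Phi b t - 1"
      using D Phi_has_derivative[OF t] at_within_Ici_nontrivial[OF t]
      by (rule has_field_derivative_unique)
    then show "\<bar>D\<bar> \<le> max a (max 1 (c / (1 - c)))" using bound[OF t] by simp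
  qed
qed

end

lemma b0_ereal_nonneg: "0 \<le> b0_ereal b b'"
  unfolding b0_ereal_def by (rule le_Limsup) auto

lemma slowly_varying_from_b0_ereal:
  assumes "b0_ereal b b' < ereal c" and pos: "\<And>t. 0 \<le> t \<Longrightarrow> 0 < b t"
  shows "\<exists>T>0. \<forall>t\<ge>T. \<bar>b' t\<bar> \<le> c * (b t)\<^sup>2"
proof -
  have "eventually (\<lambda>t. ereal (\<bar>b' t\<bar> / (b t)\<^sup>2) < ereal c) at_top"
    using assms(1) unfolding b0_ereal_def by (rule Limsup_lessD)
  then obtain T0 where T0: "\<And>t. T0 \<le> t \<Longrightarrow> \<bar>b' t\<bar> / (b t)\<^sup>2 < c"
    unfolding eventually_at_top_linorder by auto
  have "\<bar>b' t\<bar> \<le> c * (b t)\<^sup>2" if "max T0 1 \<le> t" for t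
    using T0[of t] pos[of t] that by (simp add: pos_divide_less_eq)
  then show ?thesis by (intro exI[of _ "max T0 1"]) auto
qed

theorem lemma2p2:
  fixes b b' :: "real \<Rightarrow> real"
  assumes deriv_b: "\<And>t. t \<ge> 0 \<Longrightarrow> (b has_real_derivative b' t) (at t within {0..})"
    and cont_b': "continuous_on {0..} b'"
    and pos: "\<And>t. t \<ge> 0 \<Longrightarrow> b t > 0"
    and b0_lt: "b0_ereal b b' < 1"
  shows "(\<forall>t\<ge>0. (\<lambda>s. exp (- integral {t..s} b)) integrable_on {t..})
    \<and> Phi b 0 = integral {0..} (\<lambda>s. exp (- integral {0..s} b))
    \<and> (\<forall>t\<ge>0. (Phi b has_real_derivative (b t * Phi b t - 1)) (at t within {0..}))
    \<and> (\<exists>t0>0. \<exists>B1>0. \<exists>B2>0.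
         (\<forall>t\<ge>t0. B1 / b t \<le> Phi b t \<and> Phi b t \<le> B2 / b t)
       \<and> (\<forall>t\<ge>t0. \<bar>deriv (Phi b) t\<bar> \<le> (1 + real_of_ereal (b0_ereal b b')) / (1 - real_of_ereal (b0_ereal b b'))))
    \<and> (\<exists>M. \<forall>t\<ge>0. \<forall>D. (Phi b has_real_derivative D) (at t within {0..}) \<longrightarrow> \<bar>D\<bar> \<le> M)"
proof -
  obtain b0 where b0: "b0_ereal b b' = ereal b0" "0 \<le> b0" "b0 < 1"
    using b0_ereal_nonneg[of b b'] b0_lt by (cases "b0_ereal b b'") auto
  \<comment> \<open>Any c in (b0, 1) works; this one makes c / (1 - c) = (1 + b0) / (1 - b0).\<close>
  define c where "c = (1 + b0) / 2"
  have "b0_ereal b b' < ereal c" and "c < 1" using b0 by (auto simp: c_def)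
  then obtain T where "0 < T" "\<And>t. T \<le> t \<Longrightarrow> \<bar>b' t\<bar> \<le> c * (b t)\<^sup>2"
    using slowly_varying_from_b0_ereal pos by blast
  then interpret slowly_varying_rate b b' c T
    using deriv_b pos \<open>c < 1\<close> by unfold_locales auto
  have "max 1 (c / (1 - c)) = (1 + b0) / (1 - b0)"
    using b0 by (simp add: c_def field_simps max_def)
  then have deriv_bound: "\<bar>deriv (Phi b) t\<bar> \<le> (1 + b0) / (1 - b0)" if "T \<le> t" for t
    using b_Phi_bound[OF that] deriv_Phi[of t] that T_pos by simp
  have "\<exists>t0>0. \<exists>B1>0. \<exists>B2>0. (\<forall>t\<ge>t0. B1 / b t \<le> Phi b t \<and> Phi b t \<le> B2 / b t)
      \<and> (\<forall>t\<ge>t0. \<bar>deriv (Phi b) t\<bar> \<le> (1 + b0) / (1 - b0))"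
  proof (intro exI conjI allI impI)
    show "0 < T" "0 < exp (- 1) / (2::real)" "0 < 1 / (1 - c)" using T_pos c_less_1 by auto
    fix t assume "T \<le> t"
    then show "exp (- 1) / 2 / b t \<le> Phi b t" "Phi b t \<le> 1 / (1 - c) / b t"
      and "\<bar>deriv (Phi b) t\<bar> \<le> (1 + b0) / (1 - b0)"
      using Phi_lower Phi_upper deriv_bound by auto
  qed
  then show ?thesis
    using exp_integral_b_integrable Phi_has_derivative Phi_derivative_bounded
    unfolding b0(1) by (simp add: Phi_def)
qed

end
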